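(* Let $m\ge d>0$, let $A(x)=\sum_{i=0}^d a_ix^i=a_d\prod_{i=1}^d(x-\alpha_i)\in\mathbb{Z}[x]$ be primitive of degree $d$ with $a_0\ne0$, and let $\theta_1,\dots,\theta_m\in\mathbb{R}$ satisfy $\sum_{i=0}^d a_i\theta_{j+i}=0$ for $1\le j\le m-d$, with $\theta_1,\dots,\theta_d$ linearly independent over $\mathbb{Q}$. Then $S_{\theta,m}=\{\pi_m(t\theta_1,\dots,t\theta_m):t\in\mathbb{R}\}$ is $\epsilon$-dense for every \[ \epsilon\ \ge\ \left(|a_d|\prod_{i=1}^d\max\{|\alpha_i|,\,1-|\alpha_i|\}\right)^{-1}. \]
   Context: $\mathbb{T}^m=\mathbb{R}^m/\mathbb{Z}^m$, $\pi_m:\mathbb{R}^m\to\mathbb{T}^m$ is the canonical projection. For $\epsilon>0$ let $C_\epsilon=\pi_m([-\epsilon/2,\epsilon/2]^m)$. A set $S\subseteq\mathbb{T}^m$ is $\epsilon$-dense if $S+C_{\bar\epsilon}=\mathbb{T}^m$ for every $\bar\epsilon>\epsilon$. *)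

theory Defs
  imports "HOL-Analysis.Analysis" "HOL-Computational_Algebra.Polynomial"
begin

text \<open>Points of R^m are represented as functions nat => real, of which only the
coordinates 1..m matter.\<close>

definition torus_eq :: "nat \<Rightarrow> (nat \<Rightarrow> real) \<Rightarrow> (nat \<Rightarrow> real) \<Rightarrow> bool" where
  "torus_eq m x y \<longleftrightarrow> (\<forall>j\<in>{1..m}. x j - y j \<in> \<int>)"

definition cube :: "nat \<Rightarrow> real \<Rightarrow> (nat \<Rightarrow> real) set" where
  "cube m eps = {c. \<forall>j\<in>{1..m}. \<bar>c j\<bar> \<le> eps / 2}"

text \<open>A set of points of T^m, given by a set S of representatives in R^m, is eps-dense
iff S + C_eps' = T^m for every eps' > eps, i.e. every point of R^m is congruent
mod Z^m to s + c with s in S and c in the cube.\<close>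
definition eps_dense :: "nat \<Rightarrow> (nat \<Rightarrow> real) set \<Rightarrow> real \<Rightarrow> bool" where
  "eps_dense m S eps \<longleftrightarrow>
     (\<forall>eps'>eps. \<forall>x. \<exists>s\<in>S. \<exists>c\<in>cube m eps'. torus_eq m x (\<lambda>j. s j + c j))"

definition S_theta :: "(nat \<Rightarrow> real) \<Rightarrow> (nat \<Rightarrow> real) set" where
  "S_theta \<theta> = {(\<lambda>j. t * \<theta> j) | t. True}"

end

theory Submission
  imports Defs
begin

text \<open>
  Write \<open>d = deg A\<close> and let \<open>S\<close> be the shift on sequences \<open>\<nat> \<Rightarrow> R\<close>; a polynomial \<open>p\<close> acts as
  the difference operator \<open>p(S)\<close>, and the hypothesis on \<open>\<theta>\<close> says \<open>A(S) \<theta> = 0\<close> on rows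
  \<open>1..m - d\<close> (\<open>\<theta>\<close> is "recurrent").

  (1) Every \<open>x \<in> \<real>\<^sup>m\<close> is congruent mod \<open>\<int>\<^sup>m\<close> to a recurrent sequence up to an error
  \<open>1/(2B)\<close>, where \<open>1/B\<close> is the bound of the theorem.  Split \<open>A = b \<cdot> Q\<close>, where \<open>Q\<close> collects the
  roots of modulus \<open>< 1/2\<close> and \<open>b\<close> is real; then \<open>B = |b(0)| \<Prod>\<^sub>Q (1 - |\<alpha>\<^sub>i|)\<close>.  Solve
  \<open>b(S) g \<equiv> -A(S) x\<close> mod \<open>\<int>\<close> greedily with \<open>|g| \<le> 1/(2|b(0)|)\<close>, invert \<open>Q(S)\<close> on bounded
  sequences to get \<open>e\<close> with \<open>|e| \<le> 1/(2B)\<close> and \<open>A(S)(x + e)\<close> integral, and subtract an integer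
  preimage under \<open>A(S)\<close>, which exists because \<open>A\<close> is primitive.

  (2) Every recurrent \<open>v\<close> is approximated mod \<open>\<int>\<^sup>m\<close> arbitrarily well by \<open>t \<theta>\<close>: after scaling by
  \<open>lead_coeff A ^ m\<close>, all terms are integer combinations of the first \<open>d\<close>, and Kronecker's theorem
  applies to the \<open>\<rat>\<close>-independent \<open>\<theta>\<^sub>1, \<dots>, \<theta>\<^sub>d\<close>.
\<close>

definition poly_shift :: "'a::comm_ring_1 poly \<Rightarrow> (nat \<Rightarrow> 'a) \<Rightarrow> nat \<Rightarrow> 'a" where
  "poly_shift p f j = (\<Sum>i\<le>degree p. coeff p i * f (j + i))"

lemma poly_shift_altdef:
  assumes "degree p \<le> N"
  shows "poly_shift p f j = (\<Sum>i\<le>N. coeff p i * f (j + i))"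
  unfolding poly_shift_def
  by (rule sum.mono_neutral_left) (use assms in \<open>auto simp: coeff_eq_0\<close>)

lemma poly_shift_0 [simp]: "poly_shift 0 f j = 0"
  by (simp add: poly_shift_def)

lemma poly_shift_1 [simp]: "poly_shift 1 f j = f j"
  by (simp add: poly_shift_def)

lemma poly_shift_add: "poly_shift (p + q) f j = poly_shift p f j + poly_shift q f j"
proof -
  let ?N = "max (degree p) (degree q)"
  have "degree (p + q) \<le> ?N" by (rule degree_add_le) auto
  then show ?thesis
    by (simp add: poly_shift_altdef[of _ ?N] poly_shift_altdef[of p ?N]
        poly_shift_altdef[of q ?N] algebra_simps sum.distrib)
qed

lemma poly_shift_smult: "poly_shift (smult a p) f j = a * poly_shift p f j"
proof -
  have "poly_shift (smult a p) f j = (\<Sum>i\<le>degree p. coeff (smult a p) i * f (j + i))"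
    by (rule poly_shift_altdef) (rule degree_smult_le)
  then show ?thesis by (simp add: poly_shift_def sum_distrib_left mult.assoc)
qed

lemma poly_shift_pCons: "poly_shift (pCons a p) f j = a * f j + poly_shift p f (Suc j)"
proof -
  have "poly_shift (pCons a p) f j = (\<Sum>i\<le>Suc (degree p). coeff (pCons a p) i * f (j + i))"
    by (rule poly_shift_altdef) simp
  also have "\<dots> = a * f j + (\<Sum>i\<le>degree p. coeff p i * f (Suc j + i))"
    by (subst sum.atMost_Suc_shift) simp
  finally show ?thesis by (simp add: poly_shift_def)
qed

lemma poly_shift_mult: "poly_shift (p * q) f j = poly_shift p (poly_shift q f) j"
proof (induction p arbitrary: j)
  case (pCons a p)
  have "pCons a p * q = smult a q + pCons 0 (p * q)"
    by (simp add: mult_pCons_left)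
  then show ?case
    by (simp add: poly_shift_add poly_shift_smult poly_shift_pCons pCons.IH)
qed simp

lemma poly_shift_linear_factor: "poly_shift [:c, 1:] f j = c * f j + f (Suc j)"
  by (simp add: poly_shift_pCons)

lemma poly_shift_Suc: "poly_shift p f (Suc j) = poly_shift p (\<lambda>i. f (Suc i)) j"
  by (simp add: poly_shift_def)

lemma poly_shift_seq_add: "poly_shift p (\<lambda>i. f i + g i) j = poly_shift p f j + poly_shift p g j"
  by (simp add: poly_shift_def sum.distrib algebra_simps)

lemma poly_shift_seq_diff: "poly_shift p (\<lambda>i. f i - g i) j = poly_shift p f j - poly_shift p g j"
  by (simp add: poly_shift_def sum_subtractf algebra_simps)

lemma poly_shift_seq_scale: "poly_shift p (\<lambda>i. c * f i) j = c * poly_shift p f j"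
  by (simp add: poly_shift_def sum_distrib_left algebra_simps)

lemma poly_shift_upd:
  "poly_shift p (f(q := v)) j =
     poly_shift p f j + (if j \<le> q \<and> q \<le> j + degree p then coeff p (q - j) * (v - f q) else 0)"
proof -
  have "poly_shift p (f(q := v)) j - poly_shift p f j =
        (\<Sum>i\<le>degree p. if i = q - j \<and> j \<le> q then coeff p (q - j) * (v - f q) else 0)"
    unfolding poly_shift_def sum_subtractf[symmetric] by (rule sum.cong) (auto simp: algebra_simps)
  also have "\<dots> = (if j \<le> q \<and> q \<le> j + degree p then coeff p (q - j) * (v - f q) else 0)"
    by (cases "j \<le> q") auto
  finally show ?thesis by (simp add: algebra_simps)
qed

lemma poly_shift_of_real:
  "poly_shift (map_poly of_real p) (\<lambda>i. of_real (f i) :: 'a::{comm_ring_1,real_algebra_1}) j =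
   of_real (poly_shift p f j)"
  by (simp add: poly_shift_def coeff_map_poly degree_map_poly)

lemma poly_shift_of_int:
  "poly_shift (map_poly of_int p) (\<lambda>i. of_int (f i) :: 'a::{comm_ring_1,ring_char_0}) j =
   of_int (poly_shift p f j)"
  by (simp add: poly_shift_def coeff_map_poly degree_map_poly)

lemma poly_shift_of_int_poly:
  "poly_shift (map_poly of_int A) (y :: nat \<Rightarrow> 'a::{comm_ring_1,ring_char_0}) j =
   (\<Sum>i=0..degree A. of_int (coeff A i) * y (j + i))"
  by (simp add: poly_shift_def coeff_map_poly degree_map_poly atLeast0AtMost)

definition real_poly :: "complex poly \<Rightarrow> bool" where
  "real_poly p \<longleftrightarrow> map_poly cnj p = p"

lemma map_poly_cnj_mult: "map_poly cnj (p * q) = map_poly cnj p * map_poly cnj q"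
  by (rule poly_eq_poly_eq_iff[THEN iffD1]) (auto simp: fun_eq_iff)

lemma real_poly_mult: "real_poly p \<Longrightarrow> real_poly q \<Longrightarrow> real_poly (p * q)"
  by (simp add: real_poly_def map_poly_cnj_mult)

lemma real_poly_smult: "c \<in> \<real> \<Longrightarrow> real_poly p \<Longrightarrow> real_poly (smult c p)"
  by (auto simp: real_poly_def poly_eq_iff coeff_map_poly Reals_cnj_iff)

lemma real_poly_of_int: "real_poly (map_poly of_int A)"
  by (simp add: real_poly_def poly_eq_iff coeff_map_poly)

lemma real_poly_cancel:
  assumes "real_poly (p * q)" "real_poly p" "p \<noteq> 0"
  shows "real_poly q"
  using assms by (auto simp: real_poly_def map_poly_cnj_mult)

lemma real_poly_smult_cancel:
  assumes "real_poly (smult c p)" "c \<in> \<real>" "c \<noteq> 0"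
  shows "real_poly p"
  using assms by (auto simp: real_poly_def poly_eq_iff coeff_map_poly Reals_cnj_iff)

lemma real_poly_Re:
  assumes "real_poly p"
  shows "map_poly of_real (map_poly Re p) = p"
proof (rule poly_eqI)
  fix i
  have "cnj (coeff p i) = coeff p i"
    using assms unfolding real_poly_def by (metis coeff_map_poly complex_cnj_zero)
  then show "coeff (map_poly of_real (map_poly Re p)) i = coeff p i"
    by (simp add: coeff_map_poly complex_eq_iff)
qed

lemma map_poly_cnj_linear: "map_poly cnj [:- a, 1:] = [:- cnj a, 1:]"
  by (simp add: map_poly_pCons)

lemma real_poly_linear: "a \<in> \<real> \<Longrightarrow> real_poly [:- a, 1:]"
  by (simp add: real_poly_def map_poly_cnj_linear Reals_cnj_iff)

lemma real_poly_conjugate_pair: "real_poly ([:- a, 1:] * [:- cnj a, 1:])"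
  unfolding real_poly_def map_poly_cnj_mult map_poly_cnj_linear complex_cnj_cnj
  by (rule mult.commute)

lemma conjugate_root_partner:
  fixes \<alpha> :: "nat \<Rightarrow> complex"
  assumes "finite I" "real_poly (\<Prod>j\<in>I. [:- \<alpha> j, 1:])" "i \<in> I" "\<alpha> i \<notin> \<real>"
  obtains k where "k \<in> I" "k \<noteq> i" "\<alpha> k = cnj (\<alpha> i)"
proof -
  let ?F = "\<Prod>j\<in>I. [:- \<alpha> j, 1:]"
  have "poly ?F (cnj (\<alpha> i)) = cnj (poly ?F (\<alpha> i))"
    using assms(2) unfolding real_poly_def by (metis poly_map_poly_cnj complex_cnj_cnj)
  also have "poly ?F (\<alpha> i) = 0"
    using assms by (auto simp: poly_prod)
  finally have "(\<Prod>j\<in>I. cnj (\<alpha> i) - \<alpha> j) = 0"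
    by (simp add: poly_prod)
  then obtain k where "k \<in> I" "\<alpha> k = cnj (\<alpha> i)"
    using assms(1) by (auto simp: prod_zero_iff)
  moreover have "k \<noteq> i" using calculation assms(4) by (auto simp: Reals_cnj_iff)
  ultimately show ?thesis using that by blast
qed

lemma real_poly_subproduct:
  fixes \<alpha> :: "nat \<Rightarrow> complex" and \<Phi> :: "complex \<Rightarrow> bool"
  assumes "finite I" "real_poly (\<Prod>i\<in>I. [:- \<alpha> i, 1:])" and \<Phi>: "\<And>z. \<Phi> (cnj z) = \<Phi> z"
  shows "real_poly (\<Prod>i\<in>{i\<in>I. \<Phi> (\<alpha> i)}. [:- \<alpha> i, 1:])"
  using assms(1,2)
proof (induction I rule: finite_psubset_induct)
  case (psubset I)
  let ?L = "\<lambda>j. [:- \<alpha> j, 1:]"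
  show ?case
  proof (cases "I = {}")
    case False
    then obtain i where i: "i \<in> I" by blast
    \<comment> \<open>remove the root \<open>\<alpha> i\<close>, together with its conjugate partner if it is not real\<close>
    obtain D where D: "i \<in> D" "D \<subseteq> I" "real_poly (\<Prod>j\<in>D. ?L j)" "\<forall>j\<in>D. \<Phi> (\<alpha> j) = \<Phi> (\<alpha> i)"
    proof (cases "\<alpha> i \<in> \<real>")
      case True
      then show ?thesis using that[of "{i}"] i real_poly_linear by auto
    next
      case False
      then obtain k where k: "k \<in> I" "k \<noteq> i" "\<alpha> k = cnj (\<alpha> i)"
        using conjugate_root_partner psubset.hyps psubset.prems i by metis
      then show ?thesis using that[of "{i, k}"] i real_poly_conjugate_pair[of "\<alpha> i"] \<Phi>
        by auto
    qed
    have fin: "finite D" using D(2) psubset.hyps finite_subset by blast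
    have split: "(\<Prod>j\<in>I. ?L j) = (\<Prod>j\<in>D. ?L j) * (\<Prod>j\<in>I - D. ?L j)"
      using prod.subset_diff[OF D(2) psubset.hyps] by (simp add: mult.commute)
    have "(\<Prod>j\<in>D. ?L j) \<noteq> 0" using fin by (simp add: prod_zero_iff)
    then have "real_poly (\<Prod>j\<in>I - D. ?L j)"
      using real_poly_cancel psubset.prems split D(3) by metis
    define R where "R = {j\<in>I - D. \<Phi> (\<alpha> j)}"
    have rest: "real_poly (\<Prod>j\<in>R. ?L j)"
      using psubset.IH[of "I - D"] D(1,2) i \<open>real_poly (\<Prod>j\<in>I - D. ?L j)\<close>
      unfolding R_def by blast
    show ?thesis
    proof (cases "\<Phi> (\<alpha> i)")
      case True
      have R: "{j\<in>I. \<Phi> (\<alpha> j)} = D \<union> R" "finite R" "D \<inter> R = {}"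
        using D True psubset.hyps by (auto simp: R_def)
      show ?thesis
        unfolding R(1) prod.union_disjoint[OF fin R(2,3)] by (rule real_poly_mult[OF D(3) rest])
    next
      case False
      then have "{j\<in>I. \<Phi> (\<alpha> j)} = R" using D(4) unfolding R_def by blast
      then show ?thesis using rest by (simp only:)
    qed
  qed (simp add: real_poly_def)
qed

text \<open>Greedy backward solution of \<open>b(S) g \<equiv> r (mod \<int>)\<close> on an initial segment, with \<open>g\<close> small:
  the first term of \<open>g\<close> enters row 0 only through \<open>coeff b 0\<close>, so it can be chosen, after the later
  terms, to fix row 0 up to a rounding error of at most 1/2.\<close>
lemma small_solution_mod_int:
  fixes b :: "real poly" and r :: "nat \<Rightarrow> real"
  assumes b0: "coeff b 0 \<noteq> 0"
  shows "\<exists>g. (\<forall>j. \<bar>g j\<bar> \<le> 1 / (2 * \<bar>coeff b 0\<bar>)) \<and> (\<forall>j<n. poly_shift b g j - r j \<in> \<int>)"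
proof (induction n arbitrary: r)
  case 0
  show ?case by (rule exI[of _ "\<lambda>_. 0"]) simp
next
  case (Suc n)
  obtain g' where g'1: "\<forall>j. \<bar>g' j\<bar> \<le> 1 / (2 * \<bar>coeff b 0\<bar>)"
    and g'2: "\<forall>j<n. poly_shift b g' j - r (Suc j) \<in> \<int>"
    using Suc.IH[of "\<lambda>j. r (Suc j)"] by blast
  define g0 where "g0 = case_nat 0 g'"
  define c where "c = r 0 - poly_shift b g0 0"
  define v where "v = (c - round c) / coeff b 0"
  define g where "g = g0(0 := v)"
  have "\<bar>c - round c\<bar> \<le> 1/2" using of_int_round_abs_le[of c] by linarith
  then have v: "\<bar>v\<bar> \<le> 1 / (2 * \<bar>coeff b 0\<bar>)"
    using b0 by (simp add: v_def abs_divide divide_simps)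
  have row0: "poly_shift b g 0 - r 0 = - round c"
    using b0 by (simp add: g_def poly_shift_upd g0_def v_def c_def)
  have rows: "poly_shift b g (Suc j) = poly_shift b g' j" for j
    by (simp add: poly_shift_Suc g_def g0_def)
  show ?case
  proof (intro exI[of _ g] conjI allI impI)
    show "\<bar>g j\<bar> \<le> 1 / (2 * \<bar>coeff b 0\<bar>)" for j
      using g'1 v by (cases j) (auto simp: g_def g0_def)
    show "poly_shift b g j - r j \<in> \<int>" if "j < Suc n" for j
      using that row0 rows g'2 by (cases j) auto
  qed
qed

text \<open>Inverting \<open>Q(S) = \<Prod>(S - \<alpha>\<^sub>i)\<close> on bounded sequences when all \<open>|\<alpha>\<^sub>i| < 1\<close>: each factor
  \<open>S - \<alpha>\<close> has a right inverse \<open>f(j+1) = h(j) + \<alpha> f(j)\<close> that increases the sup norm by at most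
  the factor \<open>1/(1 - |\<alpha>|)\<close>.\<close>
lemma bounded_preimage:
  fixes \<alpha> h :: "nat \<Rightarrow> complex"
  assumes "finite J" "\<forall>i\<in>J. cmod (\<alpha> i) < 1" "\<forall>j. cmod (h j) \<le> M"
  shows "\<exists>e. (\<forall>j. poly_shift (\<Prod>i\<in>J. [:- \<alpha> i, 1:]) e j = h j) \<and>
             (\<forall>j. cmod (e j) \<le> M / (\<Prod>i\<in>J. 1 - cmod (\<alpha> i)))"
  using assms
proof (induction J arbitrary: h M rule: finite_induct)
  case empty
  then show ?case by (intro exI[of _ h]) auto
next
  case (insert a J)
  have a1: "cmod (\<alpha> a) < 1" using insert by auto
  define f where "f = rec_nat 0 (\<lambda>j fj. h j + \<alpha> a * fj)"
  have f0: "f 0 = 0" and fS: "\<And>j. f (Suc j) = h j + \<alpha> a * f j" by (simp_all add: f_def)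
  have M0: "0 \<le> M" using insert.prems(2) norm_ge_zero order_trans by blast
  have fb: "cmod (f j) \<le> M / (1 - cmod (\<alpha> a))" for j
  proof (induction j)
    case 0 then show ?case using M0 a1 by (simp add: f0)
  next
    case (Suc j)
    have "cmod (f (Suc j)) \<le> cmod (h j) + cmod (\<alpha> a) * cmod (f j)"
      by (simp add: fS norm_mult[symmetric] norm_triangle_ineq)
    also have "\<dots> \<le> M + cmod (\<alpha> a) * (M / (1 - cmod (\<alpha> a)))"
      using insert.prems(2) Suc by (intro add_mono mult_left_mono) auto
    also have "\<dots> = M / (1 - cmod (\<alpha> a))" using a1 by (simp add: field_simps)
    finally show ?case .
  qed
  obtain e where e1: "\<forall>j. poly_shift (\<Prod>i\<in>J. [:- \<alpha> i, 1:]) e j = f j"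
    and e2: "\<forall>j. cmod (e j) \<le> (M / (1 - cmod (\<alpha> a))) / (\<Prod>i\<in>J. 1 - cmod (\<alpha> i))"
    using insert.IH[of f "M / (1 - cmod (\<alpha> a))"] insert.prems fb by auto
  have "poly_shift (\<Prod>i\<in>J. [:- \<alpha> i, 1:]) e = f" using e1 by (simp add: fun_eq_iff)
  then have "poly_shift (\<Prod>i\<in>insert a J. [:- \<alpha> i, 1:]) e j = h j" for j
    unfolding prod.insert[OF insert.hyps] poly_shift_mult by (simp add: poly_shift_linear_factor fS)
  moreover have "cmod (e j) \<le> M / (\<Prod>i\<in>insert a J. 1 - cmod (\<alpha> i))" for j
    using e2 insert.hyps by (simp add: divide_divide_eq_left mult.commute)
  ultimately show ?case by blast
qed

text \<open>The integers \<open>N\<close> for which every system \<open>A(S) w = N z\<close> (rows \<open>j < n\<close>) has an integer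
  solution \<open>w\<close>; by linearity of \<open>A(S)\<close> this set is an ideal of \<open>\<int>\<close>.\<close>
definition solvable_multiples :: "int poly \<Rightarrow> nat \<Rightarrow> int set" where
  "solvable_multiples A n = {N. \<forall>z. \<exists>w. \<forall>j<n. poly_shift A w j = N * z j}"

lemma solvable_multiples_lincomb:
  assumes "N \<in> solvable_multiples A n" "M \<in> solvable_multiples A n"
  shows "u * N + v * M \<in> solvable_multiples A n"
  unfolding solvable_multiples_def
proof safe
  fix z
  obtain w1 where w1: "\<forall>j<n. poly_shift A w1 j = N * z j"
    using assms(1) by (auto simp: solvable_multiples_def)
  obtain w2 where w2: "\<forall>j<n. poly_shift A w2 j = M * z j"
    using assms(2) by (auto simp: solvable_multiples_def)
  show "\<exists>w. \<forall>j<n. poly_shift A w j = (u * N + v * M) * z j"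
    by (rule exI[of _ "\<lambda>i. u * w1 i + v * w2 i"])
      (use w1 w2 in \<open>simp add: poly_shift_seq_add poly_shift_seq_scale algebra_simps\<close>)
qed

text \<open>Forward elimination: row \<open>n\<close> can be fixed through position \<open>n + deg A\<close>, where it meets the
  leading coefficient and which the earlier rows do not involve; the price is a factor
  \<open>lead_coeff A\<close> per row.\<close>
lemma lead_coeff_power_solvable: "lead_coeff A ^ n \<in> solvable_multiples A n"
proof (induction n)
  case 0
  show ?case by (simp add: solvable_multiples_def)
next
  case (Suc n)
  let ?L = "lead_coeff A" and ?d = "degree A"
  show ?case
    unfolding solvable_multiples_def
  proof safe
    fix z
    obtain w where w: "\<forall>j<n. poly_shift A w j = ?L ^ n * z j"
      using Suc.IH by (auto simp: solvable_multiples_def)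
    define \<delta> where "\<delta> = ?L ^ n * z n - poly_shift A w n"
    define w' where "w' = (\<lambda>i. ?L * w i)(n + ?d := ?L * w (n + ?d) + \<delta>)"
    have "poly_shift A w' j = ?L ^ Suc n * z j" if "j < Suc n" for j
    proof (cases "j = n")
      case True
      then show ?thesis
        by (simp add: w'_def poly_shift_upd poly_shift_seq_scale) (simp add: \<delta>_def algebra_simps)
    next
      case False
      then show ?thesis using w that by (simp add: w'_def poly_shift_upd poly_shift_seq_scale)
    qed
    then show "\<exists>w. \<forall>j<Suc n. poly_shift A w j = ?L ^ Suc n * z j" by blast
  qed
qed

text \<open>Backward elimination modulo a prime \<open>p\<close>: if \<open>s\<close> is the first index with \<open>p \<nmid> a\<^sub>s\<close>, row 0
  can be fixed mod \<open>p\<close> through position \<open>s\<close>, which the later rows only meet through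
  coefficients divisible by \<open>p\<close>.\<close>
lemma solvable_mod_prime:
  fixes p :: int
  assumes p: "prime p" and s: "\<not> p dvd coeff A s" "\<forall>i<s. p dvd coeff A i"
  shows "\<exists>w. \<forall>j<n. p dvd (poly_shift A w j - z j)"
proof (induction n arbitrary: z)
  case (Suc n)
  obtain w' where w': "\<forall>j<n. p dvd (poly_shift A w' j - z (Suc j))"
    using Suc.IH[of "\<lambda>j. z (Suc j)"] by blast
  have "coprime p (coeff A s)" using p s(1) by (rule prime_imp_coprime)
  then have "gcd (coeff A s) p = 1" by (simp add: gcd.commute)
  then obtain u v where uv: "u * coeff A s + v * p = 1" using bezout_int[of "coeff A s" p] by metis
  have "coeff A s \<noteq> 0" using s(1) by auto
  then have sd: "s \<le> degree A" by (rule le_degree)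
  define w0 where "w0 = case_nat 0 w'"
  define \<delta> where "\<delta> = u * (z 0 - poly_shift A w0 0)"
  define w where "w = w0(s := w0 s + \<delta>)"
  have "p dvd (poly_shift A w j - z j)" if "j < Suc n" for j
  proof (cases j)
    case 0
    have "poly_shift A w 0 - z 0 = (u * coeff A s - 1) * (z 0 - poly_shift A w0 0)"
      using sd by (simp add: w_def poly_shift_upd \<delta>_def algebra_simps)
    also have "u * coeff A s - 1 = - (v * p)" using uv by linarith
    finally show ?thesis using 0 by simp
  next
    case (Suc i)
    define X where "X = (if Suc i \<le> s \<and> s \<le> Suc i + degree A then coeff A (s - Suc i) * \<delta> else 0)"
    have "p dvd X" using s(2) by (auto simp: X_def)
    moreover have "poly_shift A w (Suc i) = poly_shift A w0 (Suc i) + X"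
      unfolding w_def poly_shift_upd X_def by simp
    moreover have "poly_shift A w0 (Suc i) = poly_shift A w' i"
      by (simp add: poly_shift_Suc w0_def)
    moreover have "p dvd (poly_shift A w' i - z (Suc i))" using w' that Suc by simp
    ultimately show ?thesis using Suc by (metis add_diff_eq diff_add_eq dvd_add)
  qed
  then show ?case by blast
qed simp

lemma solvable_mod_power:
  fixes p :: int
  assumes "\<And>z. \<exists>w. \<forall>j<n. p dvd (poly_shift A w j - z j)"
  shows "\<exists>w. \<forall>j<n. p ^ k dvd (poly_shift A w j - z j)"
proof (induction k arbitrary: z)
  case (Suc k)
  obtain w1 where w1: "\<forall>j<n. p ^ k dvd (poly_shift A w1 j - z j)" using Suc.IH by blast
  define y where "y = (\<lambda>j. (z j - poly_shift A w1 j) div p ^ k)"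
  have y: "z j - poly_shift A w1 j = p ^ k * y j" if "j < n" for j
    using w1 that unfolding y_def by (metis dvd_minus_iff minus_diff_eq dvd_mult_div_cancel)
  obtain w2 where w2: "\<forall>j<n. p dvd (poly_shift A w2 j - y j)" using assms by blast
  have "p ^ Suc k dvd (poly_shift A (\<lambda>i. w1 i + p ^ k * w2 i) j - z j)" if "j < n" for j
  proof -
    have "poly_shift A (\<lambda>i. w1 i + p ^ k * w2 i) j - z j = p ^ k * (poly_shift A w2 j - y j)"
      unfolding poly_shift_seq_add poly_shift_seq_scale using y[OF that] by (simp add: algebra_simps)
    then show ?thesis using w2 that by (simp add: mult_dvd_mono)
  qed
  then show ?case by blast
qed simp

text \<open>Unless \<open>p\<close> divides every coefficient, the ideal contains an element prime to \<open>p\<close>: write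
  \<open>lead_coeff A ^ n = p\<^sup>k K\<close> with \<open>p \<nmid> K\<close>; solving mod \<open>p\<^sup>k\<close> and correcting the remainder with
  \<open>lead_coeff A ^ n\<close> shows \<open>K\<close> is in the ideal.\<close>
lemma solvable_multiple_prime_to:
  fixes p :: int
  assumes A: "A \<noteq> 0" and p: "prime p" and nd: "\<exists>i. \<not> p dvd coeff A i"
  shows "\<exists>N\<in>solvable_multiples A n. \<not> p dvd N"
proof -
  define s where "s = (LEAST i. \<not> p dvd coeff A i)"
  have s: "\<not> p dvd coeff A s" "\<forall>i<s. p dvd coeff A i"
    using LeastI_ex[OF nd] not_less_Least unfolding s_def by blast+
  have L: "lead_coeff A ^ n \<noteq> 0" using A by simp
  moreover have "\<not> is_unit p" using p by auto
  ultimately obtain K where K: "lead_coeff A ^ n = p ^ multiplicity p (lead_coeff A ^ n) * K"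
    "\<not> p dvd K"
    using multiplicity_decompose' by metis
  let ?k = "multiplicity p (lead_coeff A ^ n)"
  have "K \<in> solvable_multiples A n"
    unfolding solvable_multiples_def
  proof safe
    fix z
    obtain w where w: "\<forall>j<n. p ^ ?k dvd (poly_shift A w j - z j)"
      using solvable_mod_power solvable_mod_prime[OF p s] by blast
    define y where "y = (\<lambda>j. (z j - poly_shift A w j) div p ^ ?k)"
    have y: "z j - poly_shift A w j = p ^ ?k * y j" if "j < n" for j
      using w that unfolding y_def by (metis dvd_minus_iff minus_diff_eq dvd_mult_div_cancel)
    obtain w2 where w2: "\<forall>j<n. poly_shift A w2 j = lead_coeff A ^ n * y j"
      using lead_coeff_power_solvable[of A n] by (auto simp: solvable_multiples_def)
    have "poly_shift A (\<lambda>i. K * w i + w2 i) j = K * z j" if "j < n" for j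
    proof -
      have "poly_shift A (\<lambda>i. K * w i + w2 i) j = K * poly_shift A w j + lead_coeff A ^ n * y j"
        using w2 that by (simp add: poly_shift_seq_add poly_shift_seq_scale)
      also have "\<dots> = K * (poly_shift A w j + p ^ ?k * y j)" by (subst K(1)) (simp add: algebra_simps)
      also have "\<dots> = K * z j" using y[OF that] by simp
      finally show ?thesis .
    qed
    then show "\<exists>w. \<forall>j<n. poly_shift A w j = K * z j" by blast
  qed
  then show ?thesis using K by blast
qed

lemma int_ideal_contains_one:
  fixes S :: "int set"
  assumes lin: "\<And>N M u v. N \<in> S \<Longrightarrow> M \<in> S \<Longrightarrow> u * N + v * M \<in> S"
    and nonzero: "N0 \<in> S" "N0 \<noteq> 0"
    and coprime: "\<And>p. prime p \<Longrightarrow> \<exists>N\<in>S. \<not> p dvd N"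
  shows "1 \<in> S"
proof -
  have "1 \<in> S" if "N \<in> S" "N \<noteq> 0" "nat \<bar>N\<bar> = k" for N k
    using that
  proof (induction k arbitrary: N rule: less_induct)
    case (less k)
    show ?case
    proof (cases "is_unit N")
      case True
      then have "\<bar>N\<bar> \<le> 1" by (simp add: dvd_imp_le_int)
      then have "N = 1 \<or> N = -1" using less.prems(2) by linarith
      then show ?thesis using lin[OF less.prems(1) less.prems(1), of "-1" 0] less.prems(1) by auto
    next
      case False
      then obtain p where p: "p dvd N" "prime p" using prime_divisor_exists less.prems(2) by blast
      obtain M where M: "M \<in> S" "\<not> p dvd M" using coprime p(2) by blast
      obtain u v where uv: "u * N + v * M = gcd N M" using bezout_int by blast
      have G: "gcd N M \<in> S" using lin[OF less.prems(1) M(1)] uv by metis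
      have "\<not> N dvd gcd N M" using p M by (meson dvd_trans gcd_dvd2)
      then have "\<bar>gcd N M\<bar> \<noteq> \<bar>N\<bar>" by (metis abs_dvd_iff dvd_refl)
      moreover have "\<bar>gcd N M\<bar> \<le> \<bar>N\<bar>" using less.prems(2) dvd_imp_le_int[of N "gcd N M"] by simp
      ultimately have "nat \<bar>gcd N M\<bar> < k" using less.prems(3) by linarith
      then show ?thesis using less.IH G less.prems(2) by simp
    qed
  qed
  then show ?thesis using nonzero by blast
qed

lemma primitive_poly_shift_surj:
  fixes A :: "int poly" and z :: "nat \<Rightarrow> int"
  assumes "content A = 1"
  shows "\<exists>w. \<forall>j<n. poly_shift A w j = z j"
proof -
  have A: "A \<noteq> 0" using assms by auto
  have "\<exists>i. \<not> p dvd coeff A i" if "prime p" for p :: int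
  proof (rule ccontr)
    assume "\<not> (\<exists>i. \<not> p dvd coeff A i)"
    then have "[:p:] dvd A" by (simp add: const_poly_dvd_iff)
    then have "p dvd content A" by (simp add: const_poly_dvd_iff_dvd_content)
    then have "is_unit p" using assms by simp
    then show False using that not_prime_unit by blast
  qed
  then have "1 \<in> solvable_multiples A n"
    using int_ideal_contains_one[of "solvable_multiples A n", OF solvable_multiples_lincomb
        lead_coeff_power_solvable] solvable_multiple_prime_to[OF A] A by simp
  then show ?thesis by (simp add: solvable_multiples_def)
qed

definition recurrent :: "int poly \<Rightarrow> nat \<Rightarrow> (nat \<Rightarrow> real) \<Rightarrow> bool" where
  "recurrent A m y \<longleftrightarrow> (\<forall>j\<in>{1..m - degree A}. poly_shift (map_poly of_int A) y j = 0)"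

lemma recurrent_row:
  fixes A :: "int poly"
  assumes y: "recurrent A m y" and r: "r \<in> {1..m - degree A}"
  shows "of_int (lead_coeff A) * y (r + degree A) =
           - (\<Sum>l<degree A. of_int (coeff A l) * y (r + l))"
proof -
  have "(\<Sum>l=0..degree A. of_int (coeff A l) * y (r + l)) = 0"
    using y r unfolding recurrent_def by (simp add: poly_shift_of_int_poly)
  moreover have "{0..degree A} = insert (degree A) {..<degree A}" by auto
  ultimately show ?thesis by (simp add: add_eq_0_iff)
qed

text \<open>Up to the factor \<open>lead_coeff A ^ j\<close>, the term \<open>y\<^sub>j\<close> of a recurrent sequence is an integer
  combination of its first \<open>d = deg A\<close> terms, with coefficients independent of \<open>y\<close>: solve row
  \<open>j - d\<close> for \<open>y\<^sub>j\<close> and use strong induction on the earlier terms.\<close>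
lemma recurrent_integer_combination:
  fixes A :: "int poly"
  defines "d \<equiv> degree A" and "L \<equiv> lead_coeff A"
  assumes A: "A \<noteq> 0" and j: "1 \<le> j" "j \<le> m"
  shows "\<exists>c::nat \<Rightarrow> int. \<forall>y. recurrent A m y \<longrightarrow> of_int L ^ j * y j = (\<Sum>i=1..d. of_int (c i) * y i)"
  using j
proof (induction j rule: less_induct)
  case (less j)
  show ?case
  proof (cases "j \<le> d")
    case True
    have "of_int L ^ j * y j = (\<Sum>i=1..d. of_int (if i = j then L ^ j else 0) * y i)" for y :: "nat \<Rightarrow> real"
      using True less.prems by (simp add: if_distrib if_distribR sum.delta' cong: if_cong)
    then show ?thesis by (intro exI[of _ "\<lambda>i. if i = j then L ^ j else 0"]) blast
  next
    case False
    define r where "r = j - d"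
    have r: "r \<in> {1..m - d}" "j = r + d" using False less.prems by (auto simp: r_def)
    have "\<forall>k. \<exists>c::nat \<Rightarrow> int. k < j \<longrightarrow> 1 \<le> k \<longrightarrow> (\<forall>y. recurrent A m y \<longrightarrow>
            of_int L ^ k * y k = (\<Sum>i=1..d. of_int (c i) * y i))"
      using less.IH less.prems by auto
    then obtain C where C: "\<And>k y. k < j \<Longrightarrow> 1 \<le> k \<Longrightarrow> recurrent A m y \<Longrightarrow>
            of_int L ^ k * y k = (\<Sum>i=1..d. of_int (C k i) * y i)"
      by metis
    define c where "c = (\<lambda>i. - (\<Sum>l<d. coeff A l * L ^ (j - 1 - (r + l)) * C (r + l) i))"
    have "of_int L ^ j * y j = (\<Sum>i=1..d. of_int (c i) * y i)" if y: "recurrent A m y" for y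
    proof -
      have row: "of_int L * y j = - (\<Sum>l<d. of_int (coeff A l) * y (r + l))"
        using recurrent_row[OF y] r unfolding L_def d_def by simp
      have prev: "of_int L ^ (j - 1) * y (r + l) =
          of_int L ^ (j - 1 - (r + l)) * (\<Sum>i=1..d. of_int (C (r + l) i) * y i)" if "l < d" for l
      proof -
        have "j - 1 = (j - 1 - (r + l)) + (r + l)" using that r by simp
        then have "of_int L ^ (j - 1) * y (r + l) = of_int L ^ (j - 1 - (r + l)) * (of_int L ^ (r + l) * y (r + l))"
          by (metis power_add mult.assoc)
        also have "of_int L ^ (r + l) * y (r + l) = (\<Sum>i=1..d. of_int (C (r + l) i) * y i)"
          using C[of "r + l" y] that r y by auto
        finally show ?thesis .
      qed
      have "j = Suc (j - 1)" using less.prems by simp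
      then have "of_int L ^ j * y j = of_int L ^ (j - 1) * (of_int L * y j)"
        by (metis mult.assoc mult.commute power_Suc)
      also have "\<dots> = - (\<Sum>l<d. of_int (coeff A l) * (of_int L ^ (j - 1) * y (r + l)))"
        by (simp add: row sum_distrib_left algebra_simps)
      also have "\<dots> = - (\<Sum>l<d. of_int (coeff A l) *
                         (of_int L ^ (j - 1 - (r + l)) * (\<Sum>i=1..d. of_int (C (r + l) i) * y i)))"
        using prev by simp
      also have "\<dots> = (\<Sum>i=1..d. of_int (c i) * y i)"
        unfolding c_def
        by (simp add: sum_distrib_left sum_distrib_right sum_negf[symmetric] algebra_simps)
          (rule sum.swap)
      finally show ?thesis .
    qed
    then show ?thesis by blast
  qed
qed

lemma recurrent_scaled_combination:
  fixes A :: "int poly"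
  assumes A: "A \<noteq> 0"
  obtains C :: "nat \<Rightarrow> nat \<Rightarrow> int" where "\<And>j y. j \<in> {1..m} \<Longrightarrow> recurrent A m y \<Longrightarrow>
    of_int (lead_coeff A) ^ m * y j = (\<Sum>i=1..degree A. of_int (C j i) * y i)"
proof -
  let ?d = "degree A" and ?L = "lead_coeff A"
  have "\<forall>j. \<exists>c::nat \<Rightarrow> int. j \<in> {1..m} \<longrightarrow> (\<forall>y. recurrent A m y \<longrightarrow>
          of_int ?L ^ j * y j = (\<Sum>i=1..?d. of_int (c i) * y i))"
    using recurrent_integer_combination[OF A] by auto
  then obtain C0 where C0: "\<And>j y. j \<in> {1..m} \<Longrightarrow> recurrent A m y \<Longrightarrow>
          of_int ?L ^ j * y j = (\<Sum>i=1..?d. of_int (C0 j i) * y i)"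
    by metis
  have "of_int ?L ^ m * y j = (\<Sum>i=1..?d. of_int (?L ^ (m - j) * C0 j i) * y i)"
    if "j \<in> {1..m}" "recurrent A m y" for j y
  proof -
    have "of_int ?L ^ m * y j = of_int ?L ^ (m - j) * (of_int ?L ^ j * y j)"
      using that(1) by (simp add: power_add[symmetric])
    also have "\<dots> = (\<Sum>i=1..?d. of_int (?L ^ (m - j) * C0 j i) * y i)"
      using C0[OF that] by (simp add: sum_distrib_left algebra_simps)
    finally show ?thesis .
  qed
  then show ?thesis by (rule that[of "\<lambda>j i. ?L ^ (m - j) * C0 j i"])
qed

lemma rat_independent_inj:
  fixes \<theta> :: "nat \<Rightarrow> real"
  assumes indep: "\<forall>q :: nat \<Rightarrow> rat. (\<Sum>i=1..d. of_rat (q i) * \<theta> i) = 0 \<longrightarrow> (\<forall>i\<in>{1..d}. q i = 0)"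
  shows "inj_on \<theta> {1..d}"
proof (rule inj_onI, rule ccontr)
  fix k k' assume k: "k \<in> {1..d}" "k' \<in> {1..d}" "\<theta> k = \<theta> k'" "k \<noteq> k'"
  define q :: "nat \<Rightarrow> rat" where "q = (\<lambda>i. (if i = k then 1 else 0) - (if i = k' then 1 else 0))"
  have "(\<Sum>i=1..d. of_rat (q i) * \<theta> i) = (\<Sum>i=1..d. (if i = k then \<theta> i else 0) - (if i = k' then \<theta> i else 0))"
    by (rule sum.cong) (auto simp: q_def)
  also have "\<dots> = 0" using k by (simp add: sum_subtractf)
  finally have "q k = 0" using indep[rule_format, of q] k(1) by blast
  then show False using k by (simp add: q_def)
qed

lemma rat_independent_int_independent:
  fixes \<theta> :: "nat \<Rightarrow> real"
  assumes indep: "\<forall>q :: nat \<Rightarrow> rat. (\<Sum>i=1..d. of_rat (q i) * \<theta> i) = 0 \<longrightarrow> (\<forall>i\<in>{1..d}. q i = 0)"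
  shows "Modules.module.independent (\<lambda>r. (*) (real_of_int r)) (\<theta> ` {1..d})"
proof -
  interpret Modules.module "(\<lambda>r. (*) (real_of_int r))"
    by (simp add: Modules.module.intro distrib_left mult.commute)
  show ?thesis
  proof
    assume "dependent (\<theta> ` {1..d})"
    then obtain T u where T: "finite T" "T \<subseteq> \<theta> ` {1..d}" "(\<Sum>x\<in>T. of_int (u x) * x) = 0"
      and nz: "\<exists>x\<in>T. u x \<noteq> 0"
      unfolding dependent_explicit by auto
    define S where "S = {i\<in>{1..d}. \<theta> i \<in> T}"
    have imS: "\<theta> ` S = T" using T(2) by (auto simp: S_def)
    have injS: "inj_on \<theta> S" using rat_independent_inj[OF indep] by (rule inj_on_subset) (auto simp: S_def)
    define q :: "nat \<Rightarrow> rat" where "q = (\<lambda>i. if i \<in> S then of_int (u (\<theta> i)) else 0)"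
    have "(\<Sum>i=1..d. of_rat (q i) * \<theta> i) = (\<Sum>i\<in>S. of_int (u (\<theta> i)) * \<theta> i)"
      unfolding q_def by (rule sum.mono_neutral_cong_right) (auto simp: S_def)
    also have "\<dots> = (\<Sum>x\<in>T. of_int (u x) * x)"
      using sum.reindex[OF injS, of "\<lambda>x. of_int (u x) * x"] imS by simp
    finally have q0: "\<forall>i\<in>{1..d}. q i = 0" using T(3) indep[rule_format, of q] by simp
    obtain x where x: "x \<in> T" "u x \<noteq> 0" using nz by blast
    then obtain i where i: "i \<in> S" "x = \<theta> i" using imS by blast
    then have "i \<in> {1..d}" "q i = of_int (u x)" by (auto simp: q_def S_def)
    then show False using q0 x(2) by simp
  qed
qed

lemma kronecker_rational_independent:
  fixes \<theta> z :: "nat \<Rightarrow> real"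
  assumes indep: "\<forall>q :: nat \<Rightarrow> rat. (\<Sum>i=1..d. of_rat (q i) * \<theta> i) = 0 \<longrightarrow> (\<forall>i\<in>{1..d}. q i = 0)"
    and \<eta>: "\<eta> > 0"
  shows "\<exists>t h. \<forall>i\<in>{1..d}. \<bar>t * \<theta> i - of_int (h i) - z i\<bar> < \<eta>"
proof -
  interpret Modules.module "(\<lambda>r. (*) (real_of_int r))"
    by (simp add: Modules.module.intro distrib_left mult.commute)
  define \<beta> where "\<beta> = (\<lambda>k. \<theta> (Suc k))"
  have Suc_image: "Suc ` {..<d} = {1..d}" by (simp add: image_Suc_lessThan)
  have inj\<beta>: "inj_on \<beta> {..<d}"
    using rat_independent_inj[OF indep] unfolding \<beta>_def Suc_image[symmetric]
    by (auto simp: inj_on_def)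
  have "\<beta> ` {..<d} = \<theta> ` {1..d}"
    unfolding Suc_image[symmetric] image_image \<beta>_def ..
  then have "independent (\<beta> ` {..<d})" using rat_independent_int_independent[OF indep] by simp
  then obtain t h where th: "\<And>k. k < d \<Longrightarrow> \<bar>t * \<beta> k - of_int (h k) - z (Suc k)\<bar> < \<eta>"
    using Kronecker_thm_1[OF _ inj\<beta> \<eta>, of "\<lambda>k. z (Suc k)"] by blast
  have "\<bar>t * \<theta> i - of_int (h (i - 1)) - z i\<bar> < \<eta>" if "i \<in> {1..d}" for i
  proof -
    have "i - 1 < d" "Suc (i - 1) = i" using that by auto
    then show ?thesis using th[of "i - 1"] by (simp add: \<beta>_def)
  qed
  then show ?thesis by (intro exI[of _ t] exI[of _ "\<lambda>i. h (i - 1)"]) blast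
qed

text \<open>All terms \<open>1..m\<close> of two recurrent sequences \<open>\<theta>\<close>, \<open>v\<close> can be matched modulo \<open>\<int>\<close> by a
  multiple \<open>t \<theta>\<close> to any precision, provided the first \<open>deg A\<close> terms of \<open>\<theta>\<close> are independent
  over \<open>\<rat>\<close>: scale by \<open>N = lead_coeff A ^ m\<close>, express every term through the first \<open>deg A\<close> ones
  with integer coefficients and apply Kronecker's theorem to those.\<close>
lemma recurrent_simultaneous_approx:
  fixes A :: "int poly" and \<theta> v :: "nat \<Rightarrow> real"
  assumes A: "A \<noteq> 0" and rec: "recurrent A m \<theta>" "recurrent A m v"
    and indep: "\<forall>q :: nat \<Rightarrow> rat. (\<Sum>i=1..degree A. of_rat (q i) * \<theta> i) = 0 \<longrightarrow>
                  (\<forall>i\<in>{1..degree A}. q i = 0)"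
    and \<eta>: "\<eta> > 0"
  shows "\<exists>t h. \<forall>j\<in>{1..m}. \<bar>t * \<theta> j - v j - of_int (h j)\<bar> < \<eta>"
proof -
  let ?d = "degree A" and ?L = "lead_coeff A"
  define N :: real where "N = of_int ?L ^ m"
  have N0: "N \<noteq> 0" using A by (simp add: N_def)
  obtain C where C: "\<And>j y. j \<in> {1..m} \<Longrightarrow> recurrent A m y \<Longrightarrow>
      N * y j = (\<Sum>i=1..?d. of_int (C j i) * y i)"
    using recurrent_scaled_combination[OF A] unfolding N_def by blast
  define B :: real where "B = 1 + (\<Sum>j=1..m. \<Sum>i=1..?d. \<bar>of_int (C j i)\<bar>)"
  have B1: "B \<ge> 1" unfolding B_def by (simp add: sum_nonneg)
  obtain t h where th: "\<forall>i\<in>{1..?d}. \<bar>t * \<theta> i - of_int (h i) - v i / N\<bar> < \<eta> / B"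
    using kronecker_rational_independent[OF indep, of "\<eta> / B" "\<lambda>i. v i / N"] \<eta> B1 by auto
  define H where "H = (\<lambda>j. \<Sum>i=1..?d. C j i * h i)"
  have "\<bar>(N * t) * \<theta> j - v j - of_int (H j)\<bar> < \<eta>" if j: "j \<in> {1..m}" for j
  proof -
    have "(N * t) * \<theta> j - v j - of_int (H j) = t * (N * \<theta> j) - (N * v j) / N - of_int (H j)"
      using N0 by simp
    also have "\<dots> = (\<Sum>i=1..?d. of_int (C j i) * (t * \<theta> i - of_int (h i) - v i / N))"
      unfolding C[OF j rec(1)] C[OF j rec(2)] H_def
      by (simp add: sum_distrib_left sum_divide_distrib sum_subtractf sum.distrib right_diff_distrib algebra_simps)
    finally have eq: "(N * t) * \<theta> j - v j - of_int (H j) = \<dots>" .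
    have "\<bar>(N * t) * \<theta> j - v j - of_int (H j)\<bar> \<le> (\<Sum>i=1..?d. \<bar>of_int (C j i)\<bar> * (\<eta> / B))"
      unfolding eq
    proof (rule order_trans[OF sum_abs], rule sum_mono)
      fix i assume "i \<in> {1..?d}"
      then have "\<bar>t * \<theta> i - of_int (h i) - v i / N\<bar> \<le> \<eta> / B" using th by (simp add: less_imp_le)
      then show "\<bar>of_int (C j i) * (t * \<theta> i - of_int (h i) - v i / N)\<bar> \<le> \<bar>of_int (C j i)\<bar> * (\<eta> / B)"
        unfolding abs_mult by (rule mult_left_mono) simp
    qed
    also have "\<dots> = (\<Sum>i=1..?d. \<bar>of_int (C j i)\<bar>) * (\<eta> / B)" by (rule sum_distrib_right[symmetric])
    also have "\<dots> \<le> (B - 1) * (\<eta> / B)"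
    proof (rule mult_right_mono)
      have "(\<Sum>i=1..?d. \<bar>real_of_int (C j i)\<bar>) \<le> (\<Sum>j=1..m. \<Sum>i=1..?d. \<bar>real_of_int (C j i)\<bar>)"
        by (rule member_le_sum[of j "{1..m}" "\<lambda>j. \<Sum>i=1..?d. \<bar>real_of_int (C j i)\<bar>"])
          (use j in \<open>auto simp: sum_nonneg\<close>)
      then show "(\<Sum>i=1..?d. \<bar>real_of_int (C j i)\<bar>) \<le> B - 1" unfolding B_def by simp
    qed (use \<eta> B1 in simp)
    also have "\<dots> < \<eta>" using \<eta> B1 by (simp add: field_simps)
    finally show ?thesis .
  qed
  then show ?thesis by blast
qed

text \<open>Splitting the roots of \<open>A\<close> at modulus \<open>1/2\<close>: \<open>A = b \<cdot> Q\<close>, where \<open>Q\<close> collects the roots of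
  modulus \<open>< 1/2\<close> and \<open>b\<close> (the leading coefficient times the remaining roots) is a REAL polynomial,
  because both groups of roots are closed under conjugation.  The constant term of \<open>b\<close> is what
  turns \<open>\<Prod> max (|\<alpha>\<^sub>i|, 1 - |\<alpha>\<^sub>i|)\<close> into the bound of the theorem.\<close>
lemma split_roots_at_half:
  fixes A :: "int poly" and \<alpha> :: "nat \<Rightarrow> complex"
  assumes fin: "finite I" and A: "A \<noteq> 0"
    and fac: "map_poly of_int A = smult (of_int (lead_coeff A)) (\<Prod>i\<in>I. [:- \<alpha> i, 1:])"
  defines "J \<equiv> {i\<in>I. cmod (\<alpha> i) < 1/2}"
  obtains b :: "real poly" where
    "map_poly of_int A = map_poly of_real b * (\<Prod>i\<in>J. [:- \<alpha> i, 1:])"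
    "coeff b 0 \<noteq> 0"
    "\<bar>coeff b 0\<bar> * (\<Prod>i\<in>J. 1 - cmod (\<alpha> i)) =
       \<bar>of_int (lead_coeff A)\<bar> * (\<Prod>i\<in>I. max (cmod (\<alpha> i)) (1 - cmod (\<alpha> i)))"
proof -
  let ?L = "\<lambda>i. [:- \<alpha> i, 1:]" and ?c = "of_int (lead_coeff A) :: complex"
  define K where "K = {i\<in>I. \<not> cmod (\<alpha> i) < 1/2}"
  have JK: "I = K \<union> J" "K \<inter> J = {}" "finite J" "finite K" using fin by (auto simp: J_def K_def)
  have c: "?c \<in> \<real>" "?c \<noteq> 0" using A by auto
  have "real_poly (\<Prod>i\<in>I. ?L i)"
    using real_poly_smult_cancel[OF _ c] real_poly_of_int[of A] fac by simp
  then have "real_poly (\<Prod>i\<in>K. ?L i)"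
    using real_poly_subproduct[OF fin, of \<alpha> "\<lambda>z. \<not> cmod z < 1/2"] unfolding K_def by simp
  then have real: "real_poly (smult ?c (\<Prod>i\<in>K. ?L i))" using c by (simp add: real_poly_smult)
  define b where "b = map_poly Re (smult ?c (\<Prod>i\<in>K. ?L i))"
  have b: "map_poly of_real b = smult ?c (\<Prod>i\<in>K. ?L i)"
    unfolding b_def using real_poly_Re[OF real] .
  have "map_poly of_int A = smult ?c ((\<Prod>i\<in>K. ?L i) * (\<Prod>i\<in>J. ?L i))"
    using fac prod.union_disjoint[OF JK(4,3,2), of ?L] JK(1) by simp
  then have factor: "map_poly of_int A = map_poly of_real b * (\<Prod>i\<in>J. ?L i)"
    by (simp add: b mult_smult_left)
  have "complex_of_real (coeff b 0) = coeff (map_poly of_real b) 0" by (simp add: coeff_map_poly)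
  also have "\<dots> = ?c * (\<Prod>i\<in>K. - \<alpha> i)" by (simp add: b poly_0_coeff_0[symmetric] poly_prod)
  finally have "cmod (complex_of_real (coeff b 0)) = cmod (?c * (\<Prod>i\<in>K. - \<alpha> i))" by simp
  then have b0: "\<bar>coeff b 0\<bar> = \<bar>of_int (lead_coeff A)\<bar> * (\<Prod>i\<in>K. cmod (\<alpha> i))"
    by (simp add: norm_mult prod_norm[symmetric])
  have "(\<Prod>i\<in>K. cmod (\<alpha> i)) > 0" by (rule prod_pos) (auto simp: K_def)
  then have "coeff b 0 \<noteq> 0" using b0 A by auto
  moreover have "(\<Prod>i\<in>I. max (cmod (\<alpha> i)) (1 - cmod (\<alpha> i))) =
                 (\<Prod>i\<in>K. cmod (\<alpha> i)) * (\<Prod>i\<in>J. 1 - cmod (\<alpha> i))"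
  proof -
    have "(\<Prod>i\<in>I. max (cmod (\<alpha> i)) (1 - cmod (\<alpha> i))) =
          (\<Prod>i\<in>K. max (cmod (\<alpha> i)) (1 - cmod (\<alpha> i))) * (\<Prod>i\<in>J. max (cmod (\<alpha> i)) (1 - cmod (\<alpha> i)))"
      using prod.union_disjoint[OF JK(4,3,2)] JK(1) by simp
    also have "\<dots> = (\<Prod>i\<in>K. cmod (\<alpha> i)) * (\<Prod>i\<in>J. 1 - cmod (\<alpha> i))"
      by (intro arg_cong2[where f = "(*)"] prod.cong) (auto simp: K_def J_def)
    finally show ?thesis .
  qed
  ultimately show ?thesis using that[OF factor] b0 by (simp add: mult.assoc)
qed

lemma Re_poly_shift_of_int:
  "Re (poly_shift (map_poly of_int A) f j) = poly_shift (map_poly of_int A) (\<lambda>i. Re (f i)) j"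
  by (simp add: poly_shift_of_int_poly Re_sum)

text \<open>Given a factorisation \<open>A = b \<cdot> Q\<close>, \<open>Q = \<Prod>\<^sub>J (x - \<alpha>\<^sub>i)\<close>, with \<open>b\<close> real and all \<open>|\<alpha>\<^sub>i| < 1\<close>,
  every \<open>x\<close> has a correction \<open>e\<close> of size at most \<open>1 / (2 |b(0)| \<Prod>\<^sub>J (1 - |\<alpha>\<^sub>i|))\<close> making
  \<open>A(S)(x + e)\<close> integral on an initial segment: choose \<open>g\<close> small with \<open>b(S) g \<equiv> - A(S) x\<close>, then
  \<open>e\<close> with \<open>Q(S) e = g\<close>, so that \<open>A(S) e = b(S) g\<close>.\<close>
lemma small_integralizing_correction:
  fixes A :: "int poly" and b :: "real poly" and \<alpha> :: "nat \<Rightarrow> complex" and x :: "nat \<Rightarrow> real"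
  assumes fin: "finite J" and small: "\<forall>i\<in>J. cmod (\<alpha> i) < 1"
    and fac: "map_poly of_int A = map_poly of_real b * (\<Prod>i\<in>J. [:- \<alpha> i, 1:])"
    and b0: "coeff b 0 \<noteq> 0"
  shows "\<exists>e. (\<forall>j. \<bar>e j\<bar> \<le> 1 / (2 * (\<bar>coeff b 0\<bar> * (\<Prod>i\<in>J. 1 - cmod (\<alpha> i))))) \<and>
             (\<forall>j<n. poly_shift (map_poly of_int A) (\<lambda>i. x i + e i) j \<in> \<int>)"
proof -
  let ?A = "map_poly of_int A :: real poly" and ?Q = "\<Prod>i\<in>J. [:- \<alpha> i, 1:]"
  obtain g where g1: "\<forall>j. \<bar>g j\<bar> \<le> 1 / (2 * \<bar>coeff b 0\<bar>)"
    and g2: "\<forall>j<n. poly_shift b g j + poly_shift ?A x j \<in> \<int>"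
    using small_solution_mod_int[OF b0, of n "\<lambda>j. - poly_shift ?A x j"] by auto
  have g1': "\<forall>j. cmod (complex_of_real (g j)) \<le> 1 / (2 * \<bar>coeff b 0\<bar>)" using g1 by simp
  obtain e' where e'1: "\<forall>j. poly_shift ?Q e' j = of_real (g j)"
    and e'2: "\<forall>j. cmod (e' j) \<le> 1 / (2 * \<bar>coeff b 0\<bar>) / (\<Prod>i\<in>J. 1 - cmod (\<alpha> i))"
    using bounded_preimage[OF fin small g1'] by blast
  define e where "e = (\<lambda>j. Re (e' j))"
  have "\<bar>e j\<bar> \<le> 1 / (2 * (\<bar>coeff b 0\<bar> * (\<Prod>i\<in>J. 1 - cmod (\<alpha> i))))" for j
  proof -
    have "cmod (e' j) \<le> 1 / (2 * (\<bar>coeff b 0\<bar> * (\<Prod>i\<in>J. 1 - cmod (\<alpha> i))))"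
      using e'2 by (simp add: mult.assoc)
    then show ?thesis using abs_Re_le_cmod[of "e' j"] unfolding e_def by linarith
  qed
  moreover have "poly_shift ?A (\<lambda>i. x i + e i) j \<in> \<int>" if "j < n" for j
  proof -
    have "poly_shift ?Q e' = (\<lambda>j. of_real (g j))" using e'1 by auto
    then have "poly_shift (map_poly of_int A) e' j = of_real (poly_shift b g j)"
      by (simp add: fac poly_shift_mult poly_shift_of_real)
    then have "poly_shift ?A e j = poly_shift b g j"
      using Re_poly_shift_of_int[of A e' j] by (simp add: e_def)
    then have "poly_shift ?A (\<lambda>i. x i + e i) j = poly_shift b g j + poly_shift ?A x j"
      by (simp add: poly_shift_seq_add)
    then show ?thesis using g2 that by simp
  qed
  ultimately show ?thesis by blast
qed

text \<open>Consequently every point of \<open>\<real>\<^sup>m\<close> is congruent mod \<open>\<int>\<^sup>m\<close> to a recurrent sequence up to that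
  error: for primitive \<open>A\<close>, subtract an integer preimage of the integral values \<open>A(S)(x + e)\<close>.\<close>
lemma approx_by_recurrent:
  fixes A :: "int poly" and b :: "real poly" and \<alpha> :: "nat \<Rightarrow> complex" and x :: "nat \<Rightarrow> real"
  assumes prim: "content A = 1" and fin: "finite J" and small: "\<forall>i\<in>J. cmod (\<alpha> i) < 1"
    and fac: "map_poly of_int A = map_poly of_real b * (\<Prod>i\<in>J. [:- \<alpha> i, 1:])"
    and b0: "coeff b 0 \<noteq> 0"
  shows "\<exists>v w. recurrent A m v \<and>
           (\<forall>j. \<bar>x j - v j - of_int (w j)\<bar> \<le> 1 / (2 * (\<bar>coeff b 0\<bar> * (\<Prod>i\<in>J. 1 - cmod (\<alpha> i)))))"
proof -
  let ?A = "map_poly of_int A :: real poly"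
  define n where "n = Suc (m - degree A)"
  obtain e where e_bound: "\<forall>j. \<bar>e j\<bar> \<le> 1 / (2 * (\<bar>coeff b 0\<bar> * (\<Prod>i\<in>J. 1 - cmod (\<alpha> i))))"
    and e_int: "\<forall>j<n. poly_shift ?A (\<lambda>i. x i + e i) j \<in> \<int>"
    using small_integralizing_correction[OF fin small fac b0, of n x] by blast
  define z where "z = (\<lambda>j. \<lfloor>poly_shift ?A (\<lambda>i. x i + e i) j\<rfloor>)"
  have z: "poly_shift ?A (\<lambda>i. x i + e i) j = of_int (z j)" if "j < n" for j
    using e_int that unfolding z_def by (metis Ints_cases floor_of_int)
  obtain w where w: "\<forall>j<n. poly_shift A w j = z j"
    using primitive_poly_shift_surj[OF prim] by blast
  define v where "v = (\<lambda>j. x j + e j - of_int (w j))"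
  have "recurrent A m v"
    unfolding recurrent_def
  proof
    fix j assume "j \<in> {1..m - degree A}"
    then have "j < n" by (simp add: n_def)
    then show "poly_shift ?A v j = 0"
      using z w by (simp add: v_def poly_shift_seq_diff poly_shift_of_int)
  qed
  moreover have "\<bar>x j - v j - of_int (w j)\<bar> \<le> 1 / (2 * (\<bar>coeff b 0\<bar> * (\<Prod>i\<in>J. 1 - cmod (\<alpha> i))))" for j
    using e_bound by (simp add: v_def)
  ultimately show ?thesis by blast
qed

lemma eps_dense_by_approximation:
  fixes \<theta> :: "nat \<Rightarrow> real" and P :: "(nat \<Rightarrow> real) \<Rightarrow> bool"
  assumes approx: "\<And>x. \<exists>v w. P v \<and> (\<forall>j. \<bar>x j - v j - of_int (w j)\<bar> \<le> \<delta>)"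
    and line: "\<And>v \<eta>. P v \<Longrightarrow> \<eta> > 0 \<Longrightarrow> \<exists>t h. \<forall>j\<in>{1..m}. \<bar>t * \<theta> j - v j - of_int (h j)\<bar> < \<eta>"
    and \<epsilon>: "2 * \<delta> \<le> \<epsilon>"
  shows "eps_dense m (S_theta \<theta>) \<epsilon>"
  unfolding eps_dense_def
proof (intro allI impI)
  fix \<epsilon>' :: real and x :: "nat \<Rightarrow> real"
  assume "\<epsilon>' > \<epsilon>"
  obtain v w where v: "P v" "\<forall>j. \<bar>x j - v j - of_int (w j)\<bar> \<le> \<delta>" using approx by blast
  obtain t h where th: "\<forall>j\<in>{1..m}. \<bar>t * \<theta> j - v j - of_int (h j)\<bar> < \<epsilon>' / 2 - \<delta>"
    using line[OF v(1), of "\<epsilon>' / 2 - \<delta>"] \<open>\<epsilon>' > \<epsilon>\<close> \<epsilon> by auto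
  define c where "c = (\<lambda>j. x j - t * \<theta> j - of_int (w j - h j))"
  have "c \<in> cube m \<epsilon>'"
    unfolding cube_def
  proof safe
    fix j assume "j \<in> {1..m}"
    then have "\<bar>t * \<theta> j - v j - of_int (h j)\<bar> < \<epsilon>' / 2 - \<delta>" using th by blast
    moreover have "c j = (x j - v j - of_int (w j)) - (t * \<theta> j - v j - of_int (h j))"
      by (simp add: c_def)
    then have "\<bar>c j\<bar> \<le> \<bar>x j - v j - of_int (w j)\<bar> + \<bar>t * \<theta> j - v j - of_int (h j)\<bar>"
      by (simp only: abs_triangle_ineq4)
    ultimately show "\<bar>c j\<bar> \<le> \<epsilon>' / 2" using v(2)[rule_format, of j] by linarith
  qed
  moreover have "torus_eq m x (\<lambda>j. t * \<theta> j + c j)"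
    unfolding torus_eq_def by (auto simp: c_def)
  moreover have "(\<lambda>j. t * \<theta> j) \<in> S_theta \<theta>" by (auto simp: S_theta_def)
  ultimately show "\<exists>s\<in>S_theta \<theta>. \<exists>c\<in>cube m \<epsilon>'. torus_eq m x (\<lambda>j. s j + c j)"
    by (intro bexI[where x = "\<lambda>j. t * \<theta> j"] bexI[where x = c]) simp_all
qed

theorem mainTheorem2:
  fixes m d :: nat and A :: "int poly" and \<alpha> :: "nat \<Rightarrow> complex"
    and \<theta> :: "nat \<Rightarrow> real" and \<epsilon> :: real
  assumes "0 < d" and "d \<le> m"
    and "degree A = d"
    and "content A = 1"
    and "coeff A 0 \<noteq> 0"
    and "map_poly of_int A = smult (of_int (coeff A d)) (\<Prod>i=1..d. [:- \<alpha> i, 1:])"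
    and "\<forall>j\<in>{1..m-d}. (\<Sum>i=0..d. of_int (coeff A i) * \<theta> (j + i)) = 0"
    and "\<forall>q :: nat \<Rightarrow> rat. (\<Sum>i=1..d. of_rat (q i) * \<theta> i) = 0 \<longrightarrow> (\<forall>i\<in>{1..d}. q i = 0)"
    and "\<epsilon> \<ge> 1 / (\<bar>of_int (coeff A d)\<bar> * (\<Prod>i=1..d. max (cmod (\<alpha> i)) (1 - cmod (\<alpha> i))))"
  shows "eps_dense m (S_theta \<theta>) \<epsilon>"
proof -
  note deg = assms(3)
  have A: "A \<noteq> 0" using assms(4) by auto
  let ?J = "{i\<in>{1..d}. cmod (\<alpha> i) < 1/2}"
  obtain b where fac: "map_poly of_int A = map_poly of_real b * (\<Prod>i\<in>?J. [:- \<alpha> i, 1:])"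
    and b0: "coeff b 0 \<noteq> 0"
    and bound: "\<bar>coeff b 0\<bar> * (\<Prod>i\<in>?J. 1 - cmod (\<alpha> i)) =
                \<bar>of_int (coeff A d)\<bar> * (\<Prod>i=1..d. max (cmod (\<alpha> i)) (1 - cmod (\<alpha> i)))"
    using split_roots_at_half[of "{1..d}" A \<alpha>] A assms(6) deg by auto
  have rec: "recurrent A m \<theta>"
    using assms(7) deg by (simp add: recurrent_def poly_shift_of_int_poly)
  show ?thesis
  proof (rule eps_dense_by_approximation[where P = "recurrent A m"])
    show "\<exists>v w. recurrent A m v \<and> (\<forall>j. \<bar>x j - v j - of_int (w j)\<bar> \<le>
            1 / (2 * (\<bar>coeff b 0\<bar> * (\<Prod>i\<in>?J. 1 - cmod (\<alpha> i)))))" for x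
      using approx_by_recurrent[OF assms(4) _ _ fac b0] by auto
    show "\<exists>t h. \<forall>j\<in>{1..m}. \<bar>t * \<theta> j - v j - of_int (h j)\<bar> < \<eta>"
      if "recurrent A m v" "\<eta> > 0" for v \<eta>
      using recurrent_simultaneous_approx[OF A rec that(1) _ that(2)] assms(8) deg by simp
    show "2 * (1 / (2 * (\<bar>coeff b 0\<bar> * (\<Prod>i\<in>?J. 1 - cmod (\<alpha> i))))) \<le> \<epsilon>"
      using assms(9) bound by simp
  qed
qed

end
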